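(* Let $K=\mathbb{Q}(\sqrt{d})$ with $d>1$ square-free, let $R_K$ be its regulator, and let $a=a_1+a_2\sqrt{d}$ ($a_1,a_2\in\mathbb{Q}$) be a totally positive element of $K$. Then $a\in\mathcal{F}_K$ if and only if $$\frac{|a_2|}{a_1}\le\frac{\tanh(R_K)}{\sqrt{d}}.$$
   Context: For a totally real number field $K$ with unit group $\mathcal{O}_K^\times$, a totally positive $a\in K$ is called reduced if $\mathrm{Tr}_{K/\mathbb{Q}}(a)\le \mathrm{Tr}_{K/\mathbb{Q}}(au^2)$ for all $u\in\mathcal{O}_K^\times$; $\mathcal{F}_K$ denotes the set of reduced totally positive elements. For a real quadratic field, $R_K=\log u$ where $u>1$ is the fundamental unit. *)

theory Defs
  imports Complex_Main "HOL-Computational_Algebra.Polynomial" "HOL-Computational_Algebra.Squarefree"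
begin

text \<open>Elements of K = Q(sqrt d) are represented as pairs (a1,a2) of rationals,
  standing for a1 + a2 sqrt d.\<close>

type_synonym qelt = "rat \<times> rat"

definition qmult :: "int \<Rightarrow> qelt \<Rightarrow> qelt \<Rightarrow> qelt" where
  "qmult d a b = (fst a * fst b + of_int d * snd a * snd b, fst a * snd b + snd a * fst b)"

definition emb1 :: "int \<Rightarrow> qelt \<Rightarrow> real" where
  "emb1 d a = real_of_rat (fst a) + real_of_rat (snd a) * sqrt (real_of_int d)"

definition emb2 :: "int \<Rightarrow> qelt \<Rightarrow> real" where
  "emb2 d a = real_of_rat (fst a) - real_of_rat (snd a) * sqrt (real_of_int d)"

definition qtrace :: "int \<Rightarrow> qelt \<Rightarrow> real" where
  "qtrace d a = emb1 d a + emb2 d a"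

definition totally_positive :: "int \<Rightarrow> qelt \<Rightarrow> bool" where
  "totally_positive d a \<longleftrightarrow> emb1 d a > 0 \<and> emb2 d a > 0"

definition in_OK :: "int \<Rightarrow> qelt \<Rightarrow> bool" where
  "in_OK d a \<longleftrightarrow> (\<exists>p :: int poly. lead_coeff p = 1 \<and> poly (map_poly real_of_int p) (emb1 d a) = 0)"

definition is_unit_OK :: "int \<Rightarrow> qelt \<Rightarrow> bool" where
  "is_unit_OK d u \<longleftrightarrow> in_OK d u \<and> (\<exists>v. in_OK d v \<and> qmult d u v = (1, 0))"

definition regulator :: "int \<Rightarrow> real" where
  "regulator d = ln (Inf {emb1 d u | u. is_unit_OK d u \<and> emb1 d u > 1})"

definition reduced :: "int \<Rightarrow> qelt \<Rightarrow> bool" where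
  "reduced d a \<longleftrightarrow> totally_positive d a \<and>
     (\<forall>u. is_unit_OK d u \<longrightarrow> qtrace d a \<le> qtrace d (qmult d a (qmult d u u)))"

end

theory Submission
  imports Defs "HOL-Analysis.Kronecker_Approximation_Theorem" "Berlekamp_Zassenhaus.Factor_Bound"
begin

text \<open>Put A = a1 and B = a2 sqrt d, so that the two embeddings of a are A + B and A - B, and total
  positivity says |B| < A. Norms of algebraic integers are integers, so a unit u has norm +-1;
  writing x for the first embedding of u this gives Tr(a u^2) = (A + B) x^2 + (A - B) / x^2.
  The set of these x is closed under x -> 1/x and x -> -x, hence a is reduced iff
  Tr(a u^2) >= Tr(a) = 2A holds at x and at 1/x for every unit x > 1, and for such x this pair of
  inequalities says |B|/A <= (x^2 - 1)/(x^2 + 1) = tanh (ln x). The right-hand side increases with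
  x, so the condition holds for all units x > 1 iff it holds at their infimum, whose logarithm is
  the regulator; the infimum need not be known to be attained. That some unit exceeds 1 is Pell's
  equation, obtained by pigeonhole from the infinitely many Dirichlet approximations h/k of sqrt d,
  whose norms h^2 - d k^2 are bounded.\<close>

section \<open>Arithmetic in Q(sqrt d)\<close>

lemma sqrt_squarefree_irrational:
  fixes d :: int
  assumes "d > 1" and "squarefree d"
  shows "sqrt (real_of_int d) \<notin> \<rat>"
proof
  assume "sqrt (real_of_int d) \<in> \<rat>"
  then obtain m n :: nat where "n \<noteq> 0" and mn: "\<bar>sqrt (real_of_int d)\<bar> = real m / real n"
    and "algebraic_semidom_class.coprime m n" by (rule Rats_abs_nat_div_natE)
  have "real_of_int d = (sqrt (real_of_int d))^2" using assms(1) by simp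
  also have "\<dots> = (real m / real n)^2" using mn by (metis power2_abs)
  finally have "real_of_int d = (real m / real n)^2" .
  then have "real_of_int (d * int n ^ 2) = real_of_int (int m ^ 2)"
    using \<open>n \<noteq> 0\<close> by (simp add: field_simps)
  then have eq: "d * int n ^ 2 = int m ^ 2" by (simp only: of_int_eq_iff)
  then have "int n ^ 2 dvd int m ^ 2" by (metis dvd_triv_right)
  then have "n dvd m" by simp
  with \<open>algebraic_semidom_class.coprime m n\<close> have "n = 1"
    using coprime_common_divisor_nat[of m n n] by simp
  with eq have "d = int m ^ 2" by simp
  with assms(2) have "int m dvd 1" unfolding squarefree_def by (metis dvd_refl)
  with \<open>d = int m ^ 2\<close> assms(1) show False by simp
qed

lemma rat_combination_sqrt_eq_0D:
  fixes d :: int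
  assumes "d > 1" and "squarefree d"
    and "real_of_rat r + real_of_rat s * sqrt (real_of_int d) = 0"
  shows "r = 0" and "s = 0"
proof -
  show "s = 0"
  proof (rule ccontr)
    assume "s \<noteq> 0"
    then have "sqrt (real_of_int d) = real_of_rat (- r / s)"
      using assms(3) by (simp add: of_rat_divide of_rat_minus field_simps)
    with sqrt_squarefree_irrational[OF assms(1,2)] show False by (simp add: Rats_def)
  qed
  with assms(3) show "r = 0" by simp
qed

definition qnorm :: "int \<Rightarrow> qelt \<Rightarrow> rat" where
  "qnorm d a = fst a ^ 2 - of_int d * snd a ^ 2"

lemma emb1_qmult: "d \<ge> 0 \<Longrightarrow> emb1 d (qmult d a b) = emb1 d a * emb1 d b"
  by (cases a; cases b) (simp add: emb1_def qmult_def of_rat_add of_rat_mult algebra_simps)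

lemma emb2_qmult: "d \<ge> 0 \<Longrightarrow> emb2 d (qmult d a b) = emb2 d a * emb2 d b"
  by (cases a; cases b) (simp add: emb2_def qmult_def of_rat_add of_rat_mult algebra_simps)

lemma emb1_mult_emb2: "d \<ge> 0 \<Longrightarrow> emb1 d a * emb2 d a = real_of_rat (qnorm d a)"
  by (cases a) (simp add: emb1_def emb2_def qnorm_def of_rat_diff of_rat_mult of_rat_power
      algebra_simps power2_eq_square)

lemma qnorm_qmult: "qnorm d (qmult d a b) = qnorm d a * qnorm d b"
  by (cases a; cases b) (simp add: qnorm_def qmult_def power2_eq_square algebra_simps)

lemma qmult_commute: "qmult d a b = qmult d b a"
  by (cases a; cases b) (simp add: qmult_def algebra_simps)

lemma emb1_uminus [simp]: "emb1 d (- a) = - emb1 d a"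
  by (simp add: emb1_def of_rat_minus)

lemma qmult_uminus_uminus [simp]: "qmult d (- a) (- b) = qmult d a b"
  by (simp add: qmult_def)

section \<open>Norms of algebraic integers and units\<close>

lemma monic_dvd_monic_int_poly_coeff_in_Ints:
  fixes p :: "int poly" and g :: "rat poly"
  assumes p: "lead_coeff p = 1" and "g dvd of_int_poly p" and g: "lead_coeff g = 1"
  shows "Polynomial.coeff g i \<in> \<int>"
proof -
  obtain h where gh: "of_int_poly p = g * h" using \<open>g dvd of_int_poly p\<close> by (rule dvdE)
  obtain r rg where rr: "rat_to_normalized_int_poly g = (r, rg)" by force
  have g_rg: "g = Polynomial.smult r (of_int_poly rg)" and "r > 0"
    using rat_to_normalized_int_poly[OF rr] by auto
  obtain q where "p = rg * q" using rat_to_int_factor_explicit[OF gh rr] by blast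
  then have "lead_coeff rg * lead_coeff q = 1" using p by (metis lead_coeff_mult)
  then have "lead_coeff rg = 1 \<or> lead_coeff rg = -1" by (auto simp: zmult_eq_1_iff)
  moreover have "r * of_int (lead_coeff rg) = 1" using g g_rg \<open>r > 0\<close> by simp
  ultimately have "r = 1" using \<open>r > 0\<close> by auto
  with g_rg show ?thesis by simp
qed

interpretation of_rat_poly_hom: map_poly_idom_hom "of_rat :: rat \<Rightarrow> real" ..

lemma quadratic_dvd_of_emb1_root:
  fixes P :: "rat poly"
  assumes d: "d > 1" "squarefree d" and "y \<noteq> 0"
    and root: "poly (map_poly of_rat P) (emb1 d (x, y)) = 0"
  shows "[:qnorm d (x, y), - 2 * x, 1:] dvd P"
proof -
  define g where "g = [:qnorm d (x, y), - 2 * x, 1:]"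
  define r where "r = P mod g"
  define c0 c1 where "c0 = Polynomial.coeff r 0" and "c1 = Polynomial.coeff r 1"
  have "degree r \<le> 1"
    using degree_mod_less[of g P] by (auto simp: r_def g_def)
  then have r: "r = [:c0, c1:]"
    by (intro poly_eqI) (auto simp: c0_def c1_def coeff_pCons coeff_eq_0 split: nat.split)
  have "poly (map_poly of_rat g) (emb1 d (x, y)) = 0"
  proof -
    have "sqrt (real_of_int d) ^ 2 = real_of_int d" using d by simp
    then show ?thesis
      by (simp add: g_def qnorm_def emb1_def of_rat_diff of_rat_mult of_rat_power of_rat_minus)
        (simp add: algebra_simps power2_eq_square)
  qed
  moreover have "P = g * (P div g) + r" by (simp add: r_def)
  ultimately have "poly (map_poly of_rat r) (emb1 d (x, y)) = 0"
    using root by (metis add_0 mult_zero_left of_rat_poly_hom.hom_add of_rat_poly_hom.hom_mult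
        poly_add poly_mult)
  then have "real_of_rat (c0 + c1 * x) + real_of_rat (c1 * y) * sqrt (real_of_int d) = 0"
    unfolding r
    by (simp add: emb1_def of_rat_add of_rat_mult of_rat_hom.map_poly_pCons_hom algebra_simps)
  then have "c0 + c1 * x = 0" "c1 * y = 0"
    using rat_combination_sqrt_eq_0D[OF d] by blast+
  with \<open>y \<noteq> 0\<close> have "r = 0" unfolding r by simp
  then show ?thesis by (simp add: r_def g_def mod_eq_0_iff_dvd)
qed

lemma in_OK_qnorm_in_Ints:
  assumes d: "d > 1" "squarefree d" and "in_OK d a"
  shows "qnorm d a \<in> \<int>"
proof -
  obtain x y where a: "a = (x, y)" by (cases a)
  from \<open>in_OK d a\<close> obtain p where p: "lead_coeff p = 1"
    and "poly (map_poly real_of_int p) (emb1 d a) = 0" unfolding in_OK_def by blast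
  then have root: "poly (map_poly of_rat (of_int_poly p)) (emb1 d a) = 0"
    by (simp add: map_poly_map_poly o_def)
  show ?thesis
  proof (cases "y = 0")
    case True
    then have "real_of_rat (poly (of_int_poly p) x) = 0"
      using root by (simp add: a emb1_def)
    then have "[:- x, 1:] dvd of_int_poly p" by (simp add: poly_eq_0_iff_dvd)
    from monic_dvd_monic_int_poly_coeff_in_Ints[OF p this, of 0] have "- x \<in> \<int>" by simp
    then have "x \<in> \<int>" using Ints_minus[of "- x"] by simp
    then show ?thesis by (simp add: a True qnorm_def)
  next
    case False
    have "[:qnorm d (x, y), - 2 * x, 1:] dvd of_int_poly p"
      by (rule quadratic_dvd_of_emb1_root[OF d False root[unfolded a]])
    from monic_dvd_monic_int_poly_coeff_in_Ints[OF p this, of 0] show ?thesis by (simp add: a)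
  qed
qed

lemma is_unit_OK_abs_qnorm:
  assumes d: "d > 1" "squarefree d" and "is_unit_OK d u"
  shows "\<bar>qnorm d u\<bar> = 1"
proof -
  obtain v where u: "in_OK d u" and v: "in_OK d v" and uv: "qmult d u v = (1, 0)"
    using \<open>is_unit_OK d u\<close> unfolding is_unit_OK_def by blast
  obtain m where m: "qnorm d u = of_int m" using in_OK_qnorm_in_Ints[OF d u] by (auto elim: Ints_cases)
  obtain n where n: "qnorm d v = of_int n" using in_OK_qnorm_in_Ints[OF d v] by (auto elim: Ints_cases)
  have "qnorm d u * qnorm d v = 1" using qnorm_qmult[of d u v] uv by (simp add: qnorm_def)
  then have "m * n = 1" by (simp add: m n flip: of_int_mult)
  then show ?thesis by (auto simp: m zmult_eq_1_iff)
qed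

lemma is_unit_OK_emb2_square:
  assumes "d > 1" "squarefree d" and "is_unit_OK d u"
  shows "emb1 d u \<noteq> 0" and "emb2 d u ^ 2 = 1 / emb1 d u ^ 2"
proof -
  have "\<bar>emb1 d u * emb2 d u\<bar> = 1"
    using is_unit_OK_abs_qnorm[OF assms] emb1_mult_emb2[of d u] assms(1) by simp
  then have "emb1 d u ^ 2 * emb2 d u ^ 2 = 1" by (metis power2_abs power_mult_distrib power_one)
  then show "emb1 d u \<noteq> 0" and "emb2 d u ^ 2 = 1 / emb1 d u ^ 2"
    by (auto simp: eq_divide_eq mult.commute)
qed

lemma in_OK_uminus:
  assumes "in_OK d a"
  shows "in_OK d (- a)"
proof -
  from assms obtain p where p: "lead_coeff p = 1"
    and root: "poly (map_poly real_of_int p) (emb1 d a) = 0" unfolding in_OK_def by blast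
  define q where "q = Polynomial.smult ((-1) ^ degree p) (p \<circ>\<^sub>p [:0, -1:])"
  have "lead_coeff q = (-1) ^ degree p * (lead_coeff p * (-1) ^ degree p)"
    using lead_coeff_comp[of "[:0, -1:]" p] by (simp add: q_def)
  also have "\<dots> = 1" using p by (simp flip: power_mult_distrib)
  finally have "lead_coeff q = 1" .
  moreover have "poly (map_poly real_of_int q) (emb1 d (- a)) = 0"
    using root by (simp add: q_def of_int_hom.map_poly_hom_smult of_int_hom.map_poly_pcompose
        of_int_hom.map_poly_pCons_hom poly_pcompose)
  ultimately show ?thesis unfolding in_OK_def by blast
qed

lemma is_unit_OK_uminus: "is_unit_OK d u \<Longrightarrow> is_unit_OK d (- u)"
  unfolding is_unit_OK_def by (metis in_OK_uminus qmult_uminus_uminus)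

lemma inverse_mem_emb1_units:
  assumes "d \<ge> 0" and "x \<in> emb1 d ` Collect (is_unit_OK d)"
  shows "1 / x \<in> emb1 d ` Collect (is_unit_OK d)"
proof -
  obtain u v where x: "x = emb1 d u" and "in_OK d u" "in_OK d v" and uv: "qmult d u v = (1, 0)"
    using assms(2) unfolding is_unit_OK_def by blast
  then have "is_unit_OK d v" unfolding is_unit_OK_def by (metis qmult_commute)
  have "x * emb1 d v = 1"
    using emb1_qmult[OF assms(1), of u v] uv x by (simp add: emb1_def)
  then have "1 / x = emb1 d v" by (simp add: inverse_unique flip: inverse_eq_divide)
  with \<open>is_unit_OK d v\<close> show ?thesis by simp
qed

lemma uminus_mem_emb1_units:
  assumes "x \<in> emb1 d ` Collect (is_unit_OK d)"
  shows "- x \<in> emb1 d ` Collect (is_unit_OK d)"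
proof -
  obtain u where "is_unit_OK d u" and "x = emb1 d u" using assms by blast
  then show ?thesis by (intro image_eqI[of _ _ "- u"]) (simp_all add: is_unit_OK_uminus)
qed

lemma qtrace_qmult_unit_square:
  assumes "d > 1" "squarefree d" and "is_unit_OK d u"
  shows "qtrace d (qmult d a (qmult d u u)) = emb1 d a * emb1 d u ^ 2 + emb2 d a / emb1 d u ^ 2"
  using assms(1) is_unit_OK_emb2_square[OF assms]
  by (simp add: qtrace_def emb1_qmult emb2_qmult power2_eq_square)

lemma reduced_iff_emb1_units:
  assumes "d > 1" "squarefree d"
  shows "reduced d a \<longleftrightarrow> totally_positive d a \<and> (\<forall>x \<in> emb1 d ` Collect (is_unit_OK d).
    emb1 d a + emb2 d a \<le> emb1 d a * x^2 + emb2 d a / x^2)"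
  using qtrace_qmult_unit_square[OF assms] by (auto simp: reduced_def qtrace_def)

section \<open>Pell's equation\<close>

lemma norm_bound_of_good_approximation:
  fixes d h k :: int
  assumes d: "d > 1" "squarefree d" and "k > 0"
    and approx: "\<bar>sqrt (real_of_int d) - of_int h / of_int k\<bar> < 1 / of_int k ^ 2"
  shows "\<bar>h^2 - d * k^2\<bar> \<le> \<lceil>1 + 2 * sqrt (real_of_int d)\<rceil>" and "h^2 - d * k^2 \<noteq> 0"
proof -
  define \<theta> where "\<theta> = sqrt (real_of_int d)"
  define e where "e = of_int h - of_int k * \<theta>"
  have "\<theta> \<ge> 0" using d(1) by (simp add: \<theta>_def)
  have "\<bar>e\<bar> = of_int k * \<bar>\<theta> - of_int h / of_int k\<bar>"
    using \<open>k > 0\<close> by (simp add: e_def field_simps abs_mult[symmetric] abs_minus_commute)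
  also have "\<dots> < of_int k * (1 / of_int k ^ 2)"
    using \<open>k > 0\<close> approx unfolding \<theta>_def by (intro mult_strict_left_mono) auto
  finally have ek: "\<bar>e\<bar> * of_int k < 1"
    using \<open>k > 0\<close> by (simp add: power2_eq_square field_simps)
  have "\<bar>e\<bar> * 1 \<le> \<bar>e\<bar> * of_int k" using \<open>k > 0\<close> by (intro mult_left_mono) auto
  with ek have e1: "\<bar>e\<bar> < 1" by simp
  have "\<theta> * \<theta> = real_of_int d" using d(1) by (simp add: \<theta>_def)
  then have "of_int (h^2 - d * k^2) = e * (e + 2 * of_int k * \<theta>)"
    by (simp add: e_def power2_eq_square algebra_simps)
  also have "\<bar>\<dots>\<bar> \<le> \<bar>e\<bar> * (\<bar>e\<bar> + 2 * of_int k * \<theta>)"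
    using \<open>\<theta> \<ge> 0\<close> \<open>k > 0\<close> abs_triangle_ineq[of e "2 * of_int k * \<theta>"]
    by (simp add: abs_mult mult_left_mono)
  also have "\<dots> = \<bar>e\<bar> * \<bar>e\<bar> + (\<bar>e\<bar> * of_int k) * (2 * \<theta>)" by (simp add: algebra_simps)
  also have "\<dots> \<le> 1 + 1 * (2 * \<theta>)"
  proof (rule add_mono)
    show "\<bar>e\<bar> * \<bar>e\<bar> \<le> 1" using e1 by (intro mult_le_one) auto
    show "(\<bar>e\<bar> * of_int k) * (2 * \<theta>) \<le> 1 * (2 * \<theta>)"
      using ek \<open>\<theta> \<ge> 0\<close> by (intro mult_right_mono) auto
  qed
  finally have "real_of_int \<bar>h^2 - d * k^2\<bar> \<le> 1 + 2 * \<theta>" by simp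
  from ceiling_mono[OF this] show "\<bar>h^2 - d * k^2\<bar> \<le> \<lceil>1 + 2 * sqrt (real_of_int d)\<rceil>"
    by (simp only: ceiling_of_int \<theta>_def)
  show "h^2 - d * k^2 \<noteq> 0"
  proof
    assume "h^2 - d * k^2 = 0"
    then have "real_of_int d = (of_int \<bar>h\<bar> / of_int k)^2"
      using \<open>k > 0\<close> by (simp add: field_simps flip: of_int_power of_int_mult)
    then have "sqrt (real_of_int d) = of_int \<bar>h\<bar> / of_int k" using \<open>k > 0\<close> by simp
    with sqrt_squarefree_irrational[OF d] show False by simp
  qed
qed

lemma pell_solution_of_congruent_pairs:
  fixes d h1 k1 h2 k2 n :: int
  assumes n1: "h1^2 - d * k1^2 = n" and n2: "h2^2 - d * k2^2 = n" and "n \<noteq> 0"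
    and "n dvd h2 - h1" and "n dvd k2 - k1"
    and "algebraic_semidom_class.coprime h1 k1" and "algebraic_semidom_class.coprime h2 k2"
    and "k1 > 0" and "k2 > 0" and "(h1, k1) \<noteq> (h2, k2)"
  obtains X Y where "X^2 - d * Y^2 = 1" and "Y \<noteq> 0"
proof -
  obtain s t where s: "h2 = h1 + n * s" and t: "k2 = k1 + n * t"
    using \<open>n dvd h2 - h1\<close> \<open>n dvd k2 - k1\<close> by (metis add_diff_cancel_left' diff_add_cancel dvdE)
  \<comment> \<open>X + Y sqrt d = (h1 + k1 sqrt d)(h2 - k2 sqrt d) / n, integral as the pairs agree mod n\<close>
  define X where "X = 1 + h1 * s - d * k1 * t"
  define Y where "Y = k1 * s - h1 * t"
  have "h1 * h2 - d * k1 * k2 = (h1^2 - d * k1^2) + n * (h1 * s - d * k1 * t)"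
    by (simp add: s t algebra_simps power2_eq_square)
  then have nX: "n * X = h1 * h2 - d * k1 * k2" by (simp add: n1 X_def algebra_simps)
  have nY: "n * Y = k1 * h2 - h1 * k2" by (simp add: Y_def s t algebra_simps)
  have "n^2 * (X^2 - d * Y^2) = (n * X)^2 - d * (n * Y)^2"
    by (simp add: algebra_simps power2_eq_square)
  also have "\<dots> = (h1 * h2 - d * k1 * k2)^2 - d * (k1 * h2 - h1 * k2)^2"
    by (simp only: nX nY)
  also have "\<dots> = (h1^2 - d * k1^2) * (h2^2 - d * k2^2)"
    by (simp add: algebra_simps power2_eq_square)
  also have "\<dots> = n^2" unfolding n1 n2 by (rule power2_eq_square[symmetric])
  finally have "X^2 - d * Y^2 = 1" using \<open>n \<noteq> 0\<close> by simp
  moreover have "Y \<noteq> 0"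
  proof
    assume "Y = 0"
    then have "h1 * k2 = h2 * k1" using nY by (simp add: mult.commute)
    then have "\<bar>h1\<bar> * \<bar>k2\<bar> = \<bar>h2\<bar> * \<bar>k1\<bar>" by (metis abs_mult)
    then have "\<bar>h1\<bar> = \<bar>h2\<bar> \<and> \<bar>k2\<bar> = \<bar>k1\<bar>"
      by (rule iffD1[OF coprime_crossproduct_int[OF assms(6,7)]])
    then have "k1 = k2" using \<open>k1 > 0\<close> \<open>k2 > 0\<close> by simp
    with \<open>h1 * k2 = h2 * k1\<close> \<open>k1 > 0\<close> \<open>(h1, k1) \<noteq> (h2, k2)\<close> show False by simp
  qed
  ultimately show ?thesis by (rule that)
qed

lemma pell_nontrivial_solution:
  fixes d :: int
  assumes d: "d > 1" "squarefree d"
  obtains X Y where "X^2 - d * Y^2 = 1" and "Y \<noteq> 0"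
proof -
  define A where "A = approx_set (sqrt (real_of_int d))"
  define M where "M = \<lceil>1 + 2 * sqrt (real_of_int d)\<rceil>"
  define f where "f = (\<lambda>(h, k). (h^2 - d * k^2, h mod (h^2 - d * k^2), k mod (h^2 - d * k^2)))"
  have A: "k > 0" "algebraic_semidom_class.coprime h k"
    "\<bar>h^2 - d * k^2\<bar> \<le> M" "h^2 - d * k^2 \<noteq> 0" if "(h, k) \<in> A" for h k
    using that norm_bound_of_good_approximation[OF d, of k h]
    by (auto simp: A_def M_def approx_set_def)
  have "infinite A"
    using sqrt_squarefree_irrational[OF d] rational_iff_finite_approx_set by (auto simp: A_def)
  moreover have "f ` A \<subseteq> {-M..M} \<times> {-M..M} \<times> {-M..M}"
  proof (rule image_subsetI)
    fix z assume "z \<in> A"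
    then obtain h k where z: "z = (h, k)" and "(h, k) \<in> A" by (cases z) simp
    define m where "m = h^2 - d * k^2"
    have "m \<noteq> 0" "\<bar>m\<bar> \<le> M" using A[OF \<open>(h, k) \<in> A\<close>] by (simp_all add: m_def)
    then have "\<bar>h mod m\<bar> \<le> M" "\<bar>k mod m\<bar> \<le> M"
      using abs_mod_less[OF \<open>m \<noteq> 0\<close>] by (meson less_le_trans less_imp_le)+
    with \<open>\<bar>m\<bar> \<le> M\<close> show "f z \<in> {-M..M} \<times> {-M..M} \<times> {-M..M}"
      by (simp add: z f_def flip: m_def add: abs_le_iff)
  qed
  then have "finite (f ` A)" by (rule finite_subset) simp
  ultimately obtain a where "a \<in> A" and "infinite {b \<in> A. f b = f a}"
    using pigeonhole_infinite by blast
  then have "infinite ({b \<in> A. f b = f a} - {a})" by simp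
  from infinite_imp_nonempty[OF this] obtain b where "b \<in> A" "f b = f a" "a \<noteq> b" by blast
  obtain h1 k1 h2 k2 where a: "a = (h1, k1)" and b: "b = (h2, k2)" by (cases a, cases b)
  define n where "n = h1^2 - d * k1^2"
  have "f a = (n, h1 mod n, k1 mod n)" by (simp add: f_def a n_def)
  with \<open>f b = f a\<close> have n2: "h2^2 - d * k2^2 = n" and "h2 mod n = h1 mod n" "k2 mod n = k1 mod n"
    by (auto simp: f_def b)
  then have "n dvd h2 - h1" "n dvd k2 - k1" by (simp_all add: mod_eq_dvd_iff)
  moreover have "n \<noteq> 0" "k1 > 0" "algebraic_semidom_class.coprime h1 k1"
    using A \<open>a \<in> A\<close> by (simp_all add: a n_def)
  moreover have "k2 > 0" "algebraic_semidom_class.coprime h2 k2"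
    using A \<open>b \<in> A\<close> by (simp_all add: b)
  ultimately show ?thesis
    using pell_solution_of_congruent_pairs[OF n_def[symmetric] n2] \<open>a \<noteq> b\<close>[unfolded a b] that
    by blast
qed

lemma in_OK_of_pell_solution:
  fixes X Y :: int
  assumes "d \<ge> 0" and "X^2 - d * Y^2 = 1"
  shows "in_OK d (of_int X, of_int Y)"
  unfolding in_OK_def
proof (intro exI conjI)
  show "lead_coeff [:1, - 2 * X, 1:] = 1" by simp
  have "sqrt (real_of_int d) ^ 2 = real_of_int d" using assms(1) by simp
  moreover have "real_of_int X ^ 2 - real_of_int d * real_of_int Y ^ 2 = 1"
    using arg_cong[OF assms(2), of real_of_int] by simp
  ultimately show "poly (map_poly real_of_int [:1, - 2 * X, 1:]) (emb1 d (of_int X, of_int Y)) = 0"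
    by (simp add: emb1_def of_int_hom.map_poly_pCons_hom algebra_simps power2_eq_square)
qed

lemma is_unit_OK_of_pell_solution:
  fixes X Y :: int
  assumes "d \<ge> 0" and "X^2 - d * Y^2 = 1"
  shows "is_unit_OK d (of_int X, of_int Y)"
proof -
  have "in_OK d (of_int X, of_int (- Y))"
    using assms by (intro in_OK_of_pell_solution) simp_all
  moreover have "qmult d (of_int X, of_int Y) (of_int X, of_int (- Y)) = (1, 0)"
    using arg_cong[OF assms(2), of rat_of_int] by (simp add: qmult_def power2_eq_square)
  ultimately show ?thesis
    unfolding is_unit_OK_def using in_OK_of_pell_solution[OF assms] by blast
qed

lemma exists_unit_gt_1:
  assumes d: "d > 1" "squarefree d"
  shows "\<exists>u. is_unit_OK d u \<and> emb1 d u > 1"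
proof -
  obtain X Y where XY: "X^2 - d * Y^2 = 1" and "Y \<noteq> 0" using pell_nontrivial_solution[OF d] .
  define u :: qelt where "u = (of_int \<bar>X\<bar>, of_int \<bar>Y\<bar>)"
  have "is_unit_OK d u"
    unfolding u_def using d XY by (intro is_unit_OK_of_pell_solution) simp_all
  moreover have "emb1 d u > 1"
  proof -
    have "real_of_int \<bar>Y\<bar> \<ge> 1" using \<open>Y \<noteq> 0\<close> by linarith
    then have "1 * sqrt (real_of_int d) \<le> real_of_int \<bar>Y\<bar> * sqrt (real_of_int d)"
      using d(1) by (intro mult_right_mono) auto
    moreover have "sqrt (real_of_int d) > 1" using d by simp
    moreover have "real_of_int \<bar>X\<bar> \<ge> 0" by simp
    moreover have "emb1 d u = real_of_int \<bar>X\<bar> + real_of_int \<bar>Y\<bar> * sqrt (real_of_int d)"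
      by (simp add: u_def emb1_def del: of_int_abs)
    ultimately show ?thesis by linarith
  qed
  ultimately show ?thesis by blast
qed

section \<open>The trace condition\<close>

lemma trace_pair_ge_iff:
  fixes A B T :: real
  assumes "T > 1"
  shows "(2 * A \<le> (A + B) * T + (A - B) / T \<and> 2 * A \<le> (A + B) / T + (A - B) * T)
    \<longleftrightarrow> \<bar>B\<bar> * (T + 1) \<le> A * (T - 1)"
proof -
  have ge_iff: "2 * A \<le> (A + C) * T + (A - C) / T \<longleftrightarrow> 0 \<le> A * (T - 1) + C * (T + 1)" for C
  proof -
    have "(A + C) * T + (A - C) / T - 2 * A = (T - 1) * (A * (T - 1) + C * (T + 1)) / T"
      using assms by (simp add: field_simps)
    moreover have "0 \<le> (T - 1) * X / T \<longleftrightarrow> 0 \<le> X" for X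
      using assms by (simp add: zero_le_divide_iff zero_le_mult_iff)
    ultimately show ?thesis by (metis diff_ge_0_iff_ge)
  qed
  have "2 * A \<le> (A + B) / T + (A - B) * T \<longleftrightarrow> 0 \<le> A * (T - 1) - B * (T + 1)"
    using ge_iff[of "- B"] by (simp add: add.commute)
  moreover have "\<bar>B\<bar> * (T + 1) = \<bar>B * (T + 1)\<bar>" using assms by (simp add: abs_mult)
  ultimately show ?thesis
    unfolding ge_iff[of B] abs_le_iff by auto
qed

lemma le_tanh_ln_iff:
  fixes \<rho> t :: real
  assumes "0 \<le> \<rho>" "\<rho> < 1" and "t > 0"
  shows "\<rho> \<le> tanh (ln t) \<longleftrightarrow> sqrt ((1 + \<rho>) / (1 - \<rho>)) \<le> t"
proof -
  have "\<rho> \<le> tanh (ln t) \<longleftrightarrow> \<rho> * (t^2 + 1) \<le> t^2 - 1"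
    using assms by (simp add: tanh_ln_real pos_le_divide_eq add_pos_nonneg)
  also have "\<dots> \<longleftrightarrow> (1 + \<rho>) / (1 - \<rho>) \<le> t^2"
    using assms by (simp add: pos_divide_le_eq algebra_simps)
  also have "\<dots> \<longleftrightarrow> sqrt ((1 + \<rho>) / (1 - \<rho>)) \<le> t"
    using assms by (metis abs_of_pos real_sqrt_abs real_sqrt_le_iff)
  finally show ?thesis .
qed

lemma ball_inverse_uminus_closed_iff:
  fixes E :: "real set" and P :: "real \<Rightarrow> bool"
  assumes "0 \<notin> E" and inverse: "\<And>x. x \<in> E \<Longrightarrow> 1 / x \<in> E" and uminus: "\<And>x. x \<in> E \<Longrightarrow> - x \<in> E"
    and even: "\<And>x. P (- x) = P x" and "P 1"
  shows "(\<forall>x\<in>E. P x) \<longleftrightarrow> (\<forall>s\<in>E. 1 < s \<longrightarrow> P s \<and> P (1 / s))"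
proof
  assume "\<forall>x\<in>E. P x"
  then show "\<forall>s\<in>E. 1 < s \<longrightarrow> P s \<and> P (1 / s)" using inverse by blast
next
  assume P: "\<forall>s\<in>E. 1 < s \<longrightarrow> P s \<and> P (1 / s)"
  show "\<forall>x\<in>E. P x"
  proof
    fix x assume "x \<in> E"
    then have "\<bar>x\<bar> \<in> E" "x \<noteq> 0" using uminus assms(1) by (auto simp: abs_if)
    have "P \<bar>x\<bar>"
    proof (cases "\<bar>x\<bar>" "1 :: real" rule: linorder_cases)
      case less
      with \<open>\<bar>x\<bar> \<in> E\<close> \<open>x \<noteq> 0\<close> have "1 / \<bar>x\<bar> \<in> E" "1 < 1 / \<bar>x\<bar>" using inverse by auto
      with P have "P (1 / (1 / \<bar>x\<bar>))" by blast
      then show ?thesis by simp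
    next
      case equal
      with \<open>P 1\<close> show ?thesis by simp
    next
      case greater
      with P \<open>\<bar>x\<bar> \<in> E\<close> show ?thesis by blast
    qed
    then show "P x" by (cases "x < 0") (simp_all add: even)
  qed
qed

lemma trace_bound_iff_le_tanh_ln_Inf:
  fixes E :: "real set" and A B :: real
  assumes "\<bar>B\<bar> < A" and "0 \<notin> E"
    and inverse: "\<And>x. x \<in> E \<Longrightarrow> 1 / x \<in> E" and uminus: "\<And>x. x \<in> E \<Longrightarrow> - x \<in> E"
    and "\<exists>x\<in>E. 1 < x"
  shows "(\<forall>x\<in>E. 2 * A \<le> (A + B) * x^2 + (A - B) / x^2)
    \<longleftrightarrow> \<bar>B\<bar> / A \<le> tanh (ln (Inf {x\<in>E. 1 < x}))"
proof -
  define S where "S = {x\<in>E. 1 < x}"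
  define P where "P x \<longleftrightarrow> 2 * A \<le> (A + B) * x^2 + (A - B) / x^2" for x :: real
  define \<kappa> where "\<kappa> = sqrt ((1 + \<bar>B\<bar> / A) / (1 - \<bar>B\<bar> / A))"
  have "A > 0" and \<rho>: "0 \<le> \<bar>B\<bar> / A" "\<bar>B\<bar> / A < 1" using assms(1) by auto
  have pair: "P s \<and> P (1 / s) \<longleftrightarrow> \<kappa> \<le> s" if "s > 1" for s
  proof -
    have "s^2 > 1" using that by simp
    then have "P s \<and> P (1 / s) \<longleftrightarrow> \<bar>B\<bar> * (s^2 + 1) \<le> A * (s^2 - 1)"
      using trace_pair_ge_iff[of "s^2" A B] by (simp add: P_def power_one_over)
    also have "\<dots> \<longleftrightarrow> \<bar>B\<bar> / A \<le> tanh (ln s)"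
      using that \<open>A > 0\<close> by (simp add: tanh_ln_real field_simps add_pos_nonneg)
    also have "\<dots> \<longleftrightarrow> \<kappa> \<le> s"
      unfolding \<kappa>_def using \<rho> that by (intro le_tanh_ln_iff) auto
    finally show ?thesis .
  qed
  have "(\<forall>x\<in>E. P x) \<longleftrightarrow> (\<forall>s\<in>E. 1 < s \<longrightarrow> P s \<and> P (1 / s))"
    by (rule ball_inverse_uminus_closed_iff[OF assms(2) inverse uminus]) (simp_all add: P_def)
  also have "\<dots> \<longleftrightarrow> (\<forall>s\<in>S. \<kappa> \<le> s)" using pair by (auto simp: S_def)
  also have "\<dots> \<longleftrightarrow> \<kappa> \<le> Inf S"
    using assms(5) by (intro le_cInf_iff[symmetric]) (auto simp: S_def intro: bdd_belowI[of _ 1])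
  also have "\<dots> \<longleftrightarrow> \<bar>B\<bar> / A \<le> tanh (ln (Inf S))"
  proof -
    have "Inf S \<ge> 1" using assms(5) by (intro cInf_greatest) (auto simp: S_def)
    then show ?thesis unfolding \<kappa>_def using \<rho> by (intro le_tanh_ln_iff[symmetric]) auto
  qed
  finally show ?thesis by (simp add: P_def S_def)
qed

theorem lemma2:
  fixes d :: int and a1 a2 :: rat
  assumes "d > 1" and "squarefree d"
    and "totally_positive d (a1, a2)"
  shows "reduced d (a1, a2) \<longleftrightarrow>
    \<bar>real_of_rat a2\<bar> / real_of_rat a1 \<le> tanh (regulator d) / sqrt (real_of_int d)"
proof -
  define A B where "A = real_of_rat a1" and "B = real_of_rat a2 * sqrt (real_of_int d)"
  define E where "E = emb1 d ` Collect (is_unit_OK d)"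
  have emb: "emb1 d (a1, a2) = A + B" "emb2 d (a1, a2) = A - B"
    by (simp_all add: emb1_def emb2_def A_def B_def)
  have "reduced d (a1, a2) \<longleftrightarrow> (\<forall>x\<in>E. 2 * A \<le> (A + B) * x^2 + (A - B) / x^2)"
    using reduced_iff_emb1_units[OF assms(1,2)] assms(3) by (simp add: E_def emb)
  also have "\<dots> \<longleftrightarrow> \<bar>B\<bar> / A \<le> tanh (ln (Inf {x\<in>E. 1 < x}))"
  proof (rule trace_bound_iff_le_tanh_ln_Inf)
    show "\<bar>B\<bar> < A" using assms(3) by (auto simp: totally_positive_def emb)
    show "0 \<notin> E" using is_unit_OK_emb2_square(1)[OF assms(1,2)] by (auto simp: E_def)
    show "1 / x \<in> E" if "x \<in> E" for x
      using inverse_mem_emb1_units[of d x] that assms(1) by (simp add: E_def)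
    show "- x \<in> E" if "x \<in> E" for x
      using uminus_mem_emb1_units that by (simp add: E_def)
    show "\<exists>x\<in>E. 1 < x" using exists_unit_gt_1[OF assms(1,2)] by (auto simp: E_def)
  qed
  also have "ln (Inf {x\<in>E. 1 < x}) = regulator d"
    unfolding regulator_def E_def by (rule arg_cong[where f = "\<lambda>S. ln (Inf S)"]) auto
  also have "\<bar>B\<bar> / A \<le> tanh (regulator d) \<longleftrightarrow>
      \<bar>real_of_rat a2\<bar> / real_of_rat a1 \<le> tanh (regulator d) / sqrt (real_of_int d)"
    using assms(1) by (simp add: A_def B_def abs_mult field_simps)
  finally show ?thesis .
qed

end
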